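(* Let $A\xrightarrow{f}B\xrightarrow{g}C$ be a composable pair of morphisms in a copy-discard category. (i) If $g\circ f$ and $g$ are both discardable, then $f$ is discardable. (ii) If $g\circ f$ and $g$ are both copyable and $g$ is split monic, then $f$ is copyable.
   Context: A copy-discard (CD) category is a symmetric monoidal category $(\mathcal{K},\otimes,I)$ in which every object $X$ is equipped with morphisms $\mathsf{copy}_X:X\to X\otimes X$ and $\mathsf{del}_X:X\to I$ making $X$ a commutative comonoid (counital, coassociative, cocommutative); morphisms need not preserve this structure. A morphism $f:X\to Y$ is copyable if $\mathsf{copy}_Y\circ f=(f\otimes f)\circ\mathsf{copy}_X$, and discardable if $\mathsf{del}_Y\circ f=\mathsf{del}_X$. A morphism is split monic if it has a left inverse. *)

theory Defs
  imports Main
begin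

text \<open>Objects have type 'o, morphisms type 'm; every morphism has a domain and codomain;
composition g \<cdot> f is meaningful when cod f = dom g.\<close>

locale cd_category =
  fixes dom :: "'m \<Rightarrow> 'o" and cod :: "'m \<Rightarrow> 'o"
    and ide :: "'o \<Rightarrow> 'm"
    and comp :: "'m \<Rightarrow> 'm \<Rightarrow> 'm" (infixr \<open>\<cdot>\<close> 55)
    and tensO :: "'o \<Rightarrow> 'o \<Rightarrow> 'o"
    and tensM :: "'m \<Rightarrow> 'm \<Rightarrow> 'm" (infixr \<open>\<otimes>\<close> 60)
    and unit :: 'o
    and assoc :: "'o \<Rightarrow> 'o \<Rightarrow> 'o \<Rightarrow> 'm"
    and lunit :: "'o \<Rightarrow> 'm"
    and runit :: "'o \<Rightarrow> 'm"
    and sym :: "'o \<Rightarrow> 'o \<Rightarrow> 'm"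
    and copy :: "'o \<Rightarrow> 'm"
    and del :: "'o \<Rightarrow> 'm"
  assumes
    dom_ide: "dom (ide X) = X" and cod_ide: "cod (ide X) = X"
    and dom_comp: "cod f = dom g \<Longrightarrow> dom (g \<cdot> f) = dom f"
    and cod_comp: "cod f = dom g \<Longrightarrow> cod (g \<cdot> f) = cod g"
    and comp_ide_dom: "f \<cdot> ide (dom f) = f"
    and comp_cod_ide: "ide (cod f) \<cdot> f = f"
    and comp_assoc: "\<lbrakk>cod f = dom g; cod g = dom h\<rbrakk> \<Longrightarrow> h \<cdot> (g \<cdot> f) = (h \<cdot> g) \<cdot> f"
    and dom_tens: "dom (f \<otimes> g) = tensO (dom f) (dom g)"
    and cod_tens: "cod (f \<otimes> g) = tensO (cod f) (cod g)"
    and tens_ide: "ide X \<otimes> ide Y = ide (tensO X Y)"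
    and interchange: "\<lbrakk>cod f = dom f'; cod g = dom g'\<rbrakk> \<Longrightarrow>
        (f' \<cdot> f) \<otimes> (g' \<cdot> g) = (f' \<otimes> g') \<cdot> (f \<otimes> g)"
    and dom_assoc: "dom (assoc X Y Z) = tensO (tensO X Y) Z"
    and cod_assoc: "cod (assoc X Y Z) = tensO X (tensO Y Z)"
    and dom_lunit: "dom (lunit X) = tensO unit X" and cod_lunit: "cod (lunit X) = X"
    and dom_runit: "dom (runit X) = tensO X unit" and cod_runit: "cod (runit X) = X"
    and dom_sym: "dom (sym X Y) = tensO X Y" and cod_sym: "cod (sym X Y) = tensO Y X"
    and iso_assoc: "\<exists>k. dom k = tensO X (tensO Y Z) \<and> cod k = tensO (tensO X Y) Z \<and>
        k \<cdot> assoc X Y Z = ide (tensO (tensO X Y) Z) \<and> assoc X Y Z \<cdot> k = ide (tensO X (tensO Y Z))"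
    and iso_lunit: "\<exists>k. dom k = X \<and> cod k = tensO unit X \<and>
        k \<cdot> lunit X = ide (tensO unit X) \<and> lunit X \<cdot> k = ide X"
    and iso_runit: "\<exists>k. dom k = X \<and> cod k = tensO X unit \<and>
        k \<cdot> runit X = ide (tensO X unit) \<and> runit X \<cdot> k = ide X"
    and assoc_nat: "assoc (cod f) (cod g) (cod h) \<cdot> ((f \<otimes> g) \<otimes> h)
        = (f \<otimes> (g \<otimes> h)) \<cdot> assoc (dom f) (dom g) (dom h)"
    and lunit_nat: "lunit (cod f) \<cdot> (ide unit \<otimes> f) = f \<cdot> lunit (dom f)"
    and runit_nat: "runit (cod f) \<cdot> (f \<otimes> ide unit) = f \<cdot> runit (dom f)"
    and sym_nat: "sym (cod f) (cod g) \<cdot> (f \<otimes> g) = (g \<otimes> f) \<cdot> sym (dom f) (dom g)"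
    and pentagon: "assoc W X (tensO Y Z) \<cdot> assoc (tensO W X) Y Z
        = (ide W \<otimes> assoc X Y Z) \<cdot> assoc W (tensO X Y) Z \<cdot> (assoc W X Y \<otimes> ide Z)"
    and triangle: "(ide X \<otimes> lunit Y) \<cdot> assoc X unit Y = runit X \<otimes> ide Y"
    and hexagon: "assoc Y Z X \<cdot> sym X (tensO Y Z) \<cdot> assoc X Y Z
        = (ide Y \<otimes> sym X Z) \<cdot> assoc Y X Z \<cdot> (sym X Y \<otimes> ide Z)"
    and sym_inv: "sym Y X \<cdot> sym X Y = ide (tensO X Y)"
    and dom_copy: "dom (copy X) = X" and cod_copy: "cod (copy X) = tensO X X"
    and dom_del: "dom (del X) = X" and cod_del: "cod (del X) = unit"
    and counit_left: "lunit X \<cdot> (del X \<otimes> ide X) \<cdot> copy X = ide X"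
    and counit_right: "runit X \<cdot> (ide X \<otimes> del X) \<cdot> copy X = ide X"
    and coassoc: "assoc X X X \<cdot> (copy X \<otimes> ide X) \<cdot> copy X = (ide X \<otimes> copy X) \<cdot> copy X"
    and cocomm: "sym X X \<cdot> copy X = copy X"
begin

definition copyable :: "'m \<Rightarrow> bool" where
  "copyable f \<longleftrightarrow> copy (cod f) \<cdot> f = (f \<otimes> f) \<cdot> copy (dom f)"

definition discardable :: "'m \<Rightarrow> bool" where
  "discardable f \<longleftrightarrow> del (cod f) \<cdot> f = del (dom f)"

definition split_monic :: "'m \<Rightarrow> bool" where
  "split_monic f \<longleftrightarrow> (\<exists>r. dom r = cod f \<and> cod r = dom f \<and> r \<cdot> f = ide (dom f))"

end

end

theory Submission
  imports Defs
begin

(* Discarding: del_B f = del_C g f = del_A.  Copying: g \<otimes> g is split monic, hence monic, and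
   (g \<otimes> g) copy_B f = copy_C g f = (g f \<otimes> g f) copy_A = (g \<otimes> g)(f \<otimes> f) copy_A. *)

context cd_category
begin

lemma split_monic_tens:
  assumes "split_monic f" and "split_monic g"
  shows "split_monic (f \<otimes> g)"
proof -
  obtain r where r: "dom r = cod f" "cod r = dom f" "r \<cdot> f = ide (dom f)"
    using assms(1) unfolding split_monic_def by blast
  obtain s where s: "dom s = cod g" "cod s = dom g" "s \<cdot> g = ide (dom g)"
    using assms(2) unfolding split_monic_def by blast
  have "(r \<otimes> s) \<cdot> (f \<otimes> g) = ide (dom (f \<otimes> g))"
    using interchange[of f r g s] r s by (simp add: tens_ide dom_tens)
  then show ?thesis
    unfolding split_monic_def using r s by (intro exI[of _ "r \<otimes> s"]) (simp add: dom_tens cod_tens)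
qed

lemma split_monic_cancel:
  assumes "split_monic g" and "cod h = dom g" and "cod h' = dom g"
    and "g \<cdot> h = g \<cdot> h'"
  shows "h = h'"
proof -
  obtain r where r: "dom r = cod g" "cod r = dom g" "r \<cdot> g = ide (dom g)"
    using assms(1) unfolding split_monic_def by blast
  have "h = (r \<cdot> g) \<cdot> h"
    using r(3) assms(2) comp_cod_ide[of h] by simp
  also have "\<dots> = r \<cdot> (g \<cdot> h)"
    using assms(2) r(1) by (simp add: comp_assoc)
  also have "\<dots> = (r \<cdot> g) \<cdot> h'"
    using assms(3,4) r(1) by (simp add: comp_assoc)
  also have "\<dots> = h'"
    using r(3) assms(3) comp_cod_ide[of h'] by simp
  finally show ?thesis .
qed

lemma discardable_cancel_left:
  assumes "cod f = dom g" and "discardable (g \<cdot> f)" and "discardable g"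
  shows "discardable f"
proof -
  have "del (cod f) \<cdot> f = (del (cod g) \<cdot> g) \<cdot> f"
    using assms(1,3) unfolding discardable_def by simp
  also have "\<dots> = del (cod (g \<cdot> f)) \<cdot> (g \<cdot> f)"
    using assms(1) by (simp add: comp_assoc dom_del cod_comp)
  also have "\<dots> = del (dom f)"
    using assms(1,2) unfolding discardable_def by (simp add: dom_comp)
  finally show ?thesis
    unfolding discardable_def .
qed

lemma copyable_cancel_left:
  assumes fg: "cod f = dom g"
    and "copyable (g \<cdot> f)" and "copyable g" and "split_monic g"
  shows "copyable f"
proof -
  have "(g \<otimes> g) \<cdot> (copy (cod f) \<cdot> f) = (copy (cod g) \<cdot> g) \<cdot> f"
    using assms(3) fg unfolding copyable_def
    by (simp add: comp_assoc dom_copy cod_copy dom_tens)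
  also have "\<dots> = ((g \<cdot> f) \<otimes> (g \<cdot> f)) \<cdot> copy (dom f)"
    using assms(2) fg unfolding copyable_def
    by (simp add: comp_assoc dom_copy dom_comp cod_comp)
  also have "\<dots> = (g \<otimes> g) \<cdot> ((f \<otimes> f) \<cdot> copy (dom f))"
    using fg by (simp add: interchange comp_assoc dom_copy cod_copy cod_tens dom_tens)
  finally have "copy (cod f) \<cdot> f = (f \<otimes> f) \<cdot> copy (dom f)"
    using split_monic_cancel[OF split_monic_tens[OF assms(4,4)]] fg
    by (simp add: cod_comp dom_comp cod_copy dom_copy cod_tens dom_tens)
  then show ?thesis
    unfolding copyable_def .
qed

end

theorem lemma3p18:
  fixes dom cod :: "'m \<Rightarrow> 'o" and ide :: "'o \<Rightarrow> 'm" and comp :: "'m \<Rightarrow> 'm \<Rightarrow> 'm"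
    and tensO :: "'o \<Rightarrow> 'o \<Rightarrow> 'o" and tensM :: "'m \<Rightarrow> 'm \<Rightarrow> 'm" and unit :: 'o
    and assoc :: "'o \<Rightarrow> 'o \<Rightarrow> 'o \<Rightarrow> 'm" and lunit runit :: "'o \<Rightarrow> 'm"
    and sym :: "'o \<Rightarrow> 'o \<Rightarrow> 'm" and copy del :: "'o \<Rightarrow> 'm"
    and f g :: 'm
  assumes CD: "cd_category dom cod ide comp tensO tensM unit assoc lunit runit sym copy del"
    and composable: "cod f = dom g"
  shows "(cd_category.discardable dom cod comp del (comp g f)
            \<and> cd_category.discardable dom cod comp del g
          \<longrightarrow> cd_category.discardable dom cod comp del f)
     \<and> (cd_category.copyable dom cod comp tensM copy (comp g f)
            \<and> cd_category.copyable dom cod comp tensM copy g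
            \<and> cd_category.split_monic dom cod ide comp g
          \<longrightarrow> cd_category.copyable dom cod comp tensM copy f)"
proof -
  interpret cd_category dom cod ide comp tensO tensM unit assoc lunit runit sym copy del
    by (rule CD)
  show ?thesis
    using discardable_cancel_left[OF composable] copyable_cancel_left[OF composable] by blast
qed

end
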